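(* Let $(\ell,\ell')$ be a pair of transverse Lagrangian planes in $(\mathbb{R}^{2n},\omega)$ and let $X_\ell\subset\ell$ be a centered (non-degenerate) ellipsoid in $\ell$, with Lagrangian polar dual $X^o_{\ell'}\subset\ell'$. Let $K=X_\ell\times X^o_{\ell'}:=\{z+z': z\in X_\ell,\ z'\in X^o_{\ell'}\}\subset\mathbb{R}^{2n}$. Then: (i) there exists $S\in\mathrm{Sp}(n)$ such that the John ellipsoid of $K$ is $S(B^{2n}(1))$; (ii) $c^{\mathrm{lin}}_{\min}(K)=\pi$.
   Context: Write $z=(x,p)\in\mathbb{R}^{2n}$, $\omega((x,p),(x',p'))=p\cdot x'-p'\cdot x$. $\mathrm{Sp}(n)$ is the group of linear automorphisms preserving $\omega$. A Lagrangian plane is an $n$-dimensional subspace on which $\omega$ vanishes; $\ell,\ell'$ are transverse if $\ell\cap\ell'=0$. For a centrally symmetric convex body $X_\ell\subset\ell$, its Lagrangian polar dual in $\ell'$ is $X^o_{\ell'}=\{z'\in\ell':\omega(z,z')\le1\ \forall z\in X_\ell\}$. The John ellipsoid of a convex body is the unique maximal-volume ellipsoid contained in it. $B^{2n}(R)$ is the closed centered Euclidean ball of radius $R$. $c^{\mathrm{lin}}_{\min}(\Omega)=\sup\{\pi R^2: S(B^{2n}(z_0,R))\subset\Omega,\ S\in\mathrm{Sp}(n),\ z_0\in\mathbb{R}^{2n}\}$, where $B^{2n}(z_0,R)$ is the ball centered at $z_0$. *)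

theory Defs
  imports "HOL-Analysis.Analysis"
begin

text \<open>Phase space R^{2n} is modelled as pairs z = (x,p) of vectors in real^'n,
  with n = CARD('n). The norm on the product type is the Euclidean one.\<close>

type_synonym 'n phase = "(real^'n) \<times> (real^'n)"

definition omega :: "'n::finite phase \<Rightarrow> 'n phase \<Rightarrow> real" where
  "omega z w = snd z \<bullet> fst w - snd w \<bullet> fst z"

definition symplectic :: "('n::finite phase \<Rightarrow> 'n phase) \<Rightarrow> bool" where
  "symplectic S \<longleftrightarrow> linear S \<and> bij S \<and> (\<forall>z w. omega (S z) (S w) = omega z w)"

definition lagrangian_plane :: "'n::finite phase set \<Rightarrow> bool" where
  "lagrangian_plane L \<longleftrightarrow> subspace L \<and> dim L = CARD('n) \<and>
     (\<forall>z\<in>L. \<forall>w\<in>L. omega z w = 0)"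

definition transverse :: "'n::finite phase set \<Rightarrow> 'n phase set \<Rightarrow> bool" where
  "transverse L L' \<longleftrightarrow> L \<inter> L' = {0}"

definition centered_ellipsoid_in :: "'n::finite phase set \<Rightarrow> 'n phase set \<Rightarrow> bool" where
  "centered_ellipsoid_in L X \<longleftrightarrow>
     (\<exists>A. linear A \<and> A ` L = L \<and> inj_on A L \<and> X = A ` (cball 0 1 \<inter> L))"

definition lag_polar :: "'n::finite phase set \<Rightarrow> 'n phase set \<Rightarrow> 'n phase set" where
  "lag_polar X L' = {z'\<in>L'. \<forall>z\<in>X. omega z z' \<le> 1}"

definition lag_product :: "'n::finite phase set \<Rightarrow> 'n phase set \<Rightarrow> 'n phase set" where
  "lag_product X Y = {z + z' | z z'. z \<in> X \<and> z' \<in> Y}"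

definition solid_ellipsoid :: "'n::finite phase set \<Rightarrow> bool" where
  "solid_ellipsoid E \<longleftrightarrow> (\<exists>(A::'n phase \<Rightarrow> 'n phase) c. linear A \<and> bij A \<and> E = (\<lambda>z. c + A z) ` cball 0 1)"

definition max_vol_ellipsoid :: "'n::finite phase set \<Rightarrow> 'n phase set \<Rightarrow> bool" where
  "max_vol_ellipsoid K E \<longleftrightarrow> solid_ellipsoid E \<and> E \<subseteq> K \<and>
     (\<forall>E'. solid_ellipsoid E' \<and> E' \<subseteq> K \<longrightarrow> measure lebesgue E' \<le> measure lebesgue E)"

definition c_lin_min :: "'n::finite phase set \<Rightarrow> real" where
  "c_lin_min \<Omega> = Sup {pi * R^2 | R. R > 0 \<and>
      (\<exists>S z0. symplectic S \<and> S ` cball z0 R \<subseteq> \<Omega>)}"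

end

theory Submission
  imports Defs
begin

text \<open>Choose a linear parametrisation Phi of the Lagrangian plane L that maps the unit ball
  onto X, and the parametrisation Psi of L' dual to it with respect to omega. Then
  S0 (x, p) = Phi x + Psi p is symplectic, the polar dual of X is Psi of the unit ball, and
  K = S0 (B^n(1) \<times> B^n(1)). Volume is symplectically invariant, so every ellipsoid in K pulls
  back to an ellipsoid in the polydisc B^n(1) \<times> B^n(1). Since the polydisc is convex and
  symmetric, the centred copy of that ellipsoid also lies in it, so every coordinate functional is
  bounded by 1 on it; by Hadamard's inequality its volume is at most that of B^{2n}(1), with
  equality only for the ball itself. Hence S0 (B^{2n}(1)) is the unique John ellipsoid of K, and
  a symplectic image of a ball of radius R fits into K only if R \<le> 1.\<close>

section \<open>Volumes of linear images of phase space\<close>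

definition basis_extension :: "('a::euclidean_space \<Rightarrow> 'b::euclidean_space) \<Rightarrow> 'a \<Rightarrow> 'b" where
  "basis_extension h z = (\<Sum>b\<in>Basis. (z \<bullet> b) *\<^sub>R h b)"

lemma linear_basis_extension: "linear (basis_extension h)"
  by (rule linearI)
    (simp_all add: basis_extension_def inner_add_left scaleR_add_left sum.distrib scaleR_sum_right)

lemma bounded_linear_basis_extension: "bounded_linear (basis_extension h)"
  using linear_basis_extension linear_linear by blast

lemma borel_measurable_basis_extension: "basis_extension h \<in> borel_measurable borel"
  by (intro borel_measurable_continuous_onI linear_continuous_on bounded_linear_basis_extension)

lemma basis_extension_Basis:
  assumes "b \<in> Basis"
  shows "basis_extension h b = h b"
proof -
  have "basis_extension h b = (\<Sum>b'\<in>Basis. if b' = b then h b else 0)"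
    unfolding basis_extension_def using assms by (intro sum.cong) (auto simp: inner_Basis)
  then show ?thesis using assms by simp
qed

lemma basis_extension_inner_image:
  assumes h: "bij_betw h Basis Basis" and b: "b \<in> Basis"
  shows "basis_extension h z \<bullet> h b = z \<bullet> b"
proof -
  have "basis_extension h z \<bullet> h b = (\<Sum>b'\<in>Basis. (z \<bullet> b') * (h b' \<bullet> h b))"
    by (simp add: basis_extension_def inner_sum_left)
  also have "\<dots> = (\<Sum>b'\<in>Basis. if b' = b then z \<bullet> b else 0)"
  proof (rule sum.cong)
    fix b' :: 'a assume "b' \<in> Basis"
    moreover have "h b' \<in> Basis" "h b \<in> Basis" "h b' = h b \<longleftrightarrow> b' = b"
      using h b \<open>b' \<in> Basis\<close> by (auto simp: bij_betw_def inj_on_def)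
    ultimately show "(z \<bullet> b') * (h b' \<bullet> h b) = (if b' = b then z \<bullet> b else 0)"
      by (simp add: inner_Basis)
  qed simp
  finally show ?thesis using b by simp
qed

lemma basis_extension_inner:
  assumes "bij_betw h Basis Basis"
  shows "basis_extension h z \<bullet> basis_extension h w = z \<bullet> w"
proof -
  have "basis_extension h z \<bullet> basis_extension h w
      = (\<Sum>b'\<in>Basis. (basis_extension h z \<bullet> b') * (basis_extension h w \<bullet> b'))"
    by (rule euclidean_inner)
  also have "\<dots> = (\<Sum>b\<in>Basis. (basis_extension h z \<bullet> h b) * (basis_extension h w \<bullet> h b))"
    by (rule sum.reindex_bij_betw[OF assms, symmetric])
  also have "\<dots> = z \<bullet> w"
    by (simp add: basis_extension_inner_image[OF assms] euclidean_inner[of z w])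
  finally show ?thesis .
qed

lemma basis_extension_inv_into_inner:
  assumes h: "bij_betw h Basis Basis" and b: "b \<in> Basis"
  shows "basis_extension (inv_into Basis h) u \<bullet> b = u \<bullet> h b"
proof -
  have "h b \<in> Basis" and "inv_into Basis h (h b) = b"
    using h b by (auto simp: bij_betw_def)
  then show ?thesis
    using basis_extension_inner_image[OF bij_betw_inv_into[OF h], of "h b" u] by simp
qed

lemma basis_extension_inv_into_left:
  "bij_betw h Basis Basis \<Longrightarrow> basis_extension (inv_into Basis h) (basis_extension h z) = z"
  by (rule euclidean_eqI) (simp add: basis_extension_inv_into_inner basis_extension_inner_image)

lemma basis_extension_inv_into_right:
  assumes h: "bij_betw h Basis Basis"
  shows "basis_extension h (basis_extension (inv_into Basis h) u) = u"
proof (rule euclidean_eqI)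
  fix b' :: 'b assume "b' \<in> Basis"
  then obtain b where "b \<in> Basis" "b' = h b" using h by (auto simp: bij_betw_def)
  then show "basis_extension h (basis_extension (inv_into Basis h) u) \<bullet> b' = u \<bullet> b'"
    using h by (simp add: basis_extension_inner_image basis_extension_inv_into_inner)
qed

lemma basis_extension_vimage_box:
  assumes h: "bij_betw h Basis Basis"
  shows "basis_extension h -` box l u
    = box (basis_extension (inv_into Basis h) l) (basis_extension (inv_into Basis h) u)"
proof -
  have hB: "h ` Basis = Basis" using h by (simp add: bij_betw_def)
  have "z \<in> basis_extension h -` box l u
      \<longleftrightarrow> (\<forall>b'\<in>h ` Basis. l \<bullet> b' < basis_extension h z \<bullet> b' \<and> basis_extension h z \<bullet> b' < u \<bullet> b')"
    for z
    unfolding hB by (simp add: mem_box)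
  then show ?thesis
    using h by (auto simp: mem_box basis_extension_inner_image basis_extension_inv_into_inner)
qed

lemma distr_lborel_basis_extension:
  assumes h: "bij_betw h Basis Basis"
  shows "distr lborel borel (basis_extension h) = lborel"
proof (rule lborel_eqI[symmetric])
  let ?g = "basis_extension (inv_into Basis h)"
  fix l u :: 'b
  assume lu: "\<And>b. b \<in> Basis \<Longrightarrow> l \<bullet> b \<le> u \<bullet> b"
  have "emeasure (distr lborel borel (basis_extension h)) (box l u)
      = emeasure lborel (box (?g l) (?g u))"
    by (simp add: emeasure_distr borel_measurable_basis_extension basis_extension_vimage_box[OF h])
  also have "\<dots> = (\<Prod>b\<in>Basis. (?g u - ?g l) \<bullet> b)"
    using h lu by (intro emeasure_lborel_box)
      (auto simp: basis_extension_inv_into_inner dest: bij_betwE)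
  also have "\<dots> = (\<Prod>b\<in>Basis. (u - l) \<bullet> h b)"
    using h by (intro arg_cong[where f=ennreal] prod.cong)
      (auto simp: inner_diff_left basis_extension_inv_into_inner)
  also have "\<dots> = (\<Prod>b'\<in>Basis. (u - l) \<bullet> b')"
    by (intro arg_cong[where f=ennreal] prod.reindex_bij_betw h)
  finally show "emeasure (distr lborel borel (basis_extension h)) (box l u)
      = (\<Prod>b'\<in>Basis. (u - l) \<bullet> b')" .
qed simp

lemma measure_basis_extension_image:
  assumes h: "bij_betw h Basis Basis" and C: "C \<in> sets borel"
  shows "measure lebesgue (basis_extension h ` C) = measure lebesgue C"
proof -
  let ?f = "basis_extension h" and ?g = "basis_extension (inv_into Basis h)"
  have img: "?f ` C = ?g -` C"
    using h by (auto simp: image_iff basis_extension_inv_into_left)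
      (metis basis_extension_inv_into_right)
  have B: "?f ` C \<in> sets borel"
    unfolding img using measurable_sets[OF borel_measurable_basis_extension C] by simp
  have "measure lborel (?f ` C) = measure (distr lborel borel ?f) (?f ` C)"
    by (simp add: distr_lborel_basis_extension[OF h])
  also have "\<dots> = measure lborel (?f -` (?f ` C))"
    using B by (simp add: measure_distr borel_measurable_basis_extension)
  also have "?f -` (?f ` C) = C"
    using h by (auto simp: basis_extension_inv_into_left) (metis basis_extension_inv_into_left)
  finally show ?thesis using B C by simp
qed

text \<open>The change of variables formula for linear maps (measure_linear_image) is stated for
  real^'m with a well-ordered index type only. Phase space is therefore identified with
  real^('n bit0) by an isometry matching the standard bases, which also preserves Lebesgue
  measure.\<close>
definition phase_basis_map :: "'n::finite phase \<Rightarrow> real^('n bit0)" where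
  "phase_basis_map = (SOME h. bij_betw h Basis Basis)"

lemma bij_betw_phase_basis_map: "bij_betw (phase_basis_map :: 'n::finite phase \<Rightarrow> _) Basis Basis"
proof -
  have "card (Basis :: 'n::finite phase set) = card (Basis :: (real^('n bit0)) set)"
    by simp
  then have "\<exists>h. bij_betw h (Basis :: 'n phase set) (Basis :: (real^('n bit0)) set)"
    by (intro finite_same_card_bij) auto
  then show ?thesis unfolding phase_basis_map_def by (rule someI_ex)
qed

definition phase_coords :: "'n::finite phase \<Rightarrow> real^('n bit0)" where
  "phase_coords = basis_extension phase_basis_map"

definition coords_phase :: "real^('n::finite bit0) \<Rightarrow> 'n phase" where
  "coords_phase = basis_extension (inv_into Basis phase_basis_map)"

lemma coords_phase_coords [simp]: "coords_phase (phase_coords z) = z"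
  by (simp add: coords_phase_def phase_coords_def basis_extension_inv_into_left
      bij_betw_phase_basis_map)

lemma phase_coords_phase [simp]: "phase_coords (coords_phase u) = u"
  by (simp add: coords_phase_def phase_coords_def basis_extension_inv_into_right
      bij_betw_phase_basis_map)

lemma coords_phase_Basis: "b \<in> Basis \<Longrightarrow> coords_phase b \<in> Basis"
  using bij_betwE[OF bij_betw_inv_into[OF bij_betw_phase_basis_map]]
  by (auto simp: coords_phase_def basis_extension_Basis)

lemma linear_phase_coords: "linear phase_coords"
  and linear_coords_phase: "linear coords_phase"
  by (simp_all add: phase_coords_def coords_phase_def linear_basis_extension)

lemma phase_coords_inner: "phase_coords z \<bullet> phase_coords w = z \<bullet> w"
  by (simp add: phase_coords_def basis_extension_inner bij_betw_phase_basis_map)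

lemma phase_coords_inner_left: "phase_coords z \<bullet> u = z \<bullet> coords_phase u"
  by (metis phase_coords_inner phase_coords_phase)

lemma norm_phase_coords [simp]: "norm (phase_coords z) = norm z"
  by (simp add: norm_eq_sqrt_inner phase_coords_inner)

lemma norm_coords_phase [simp]: "norm (coords_phase u) = norm u"
  by (metis norm_phase_coords phase_coords_phase)

definition phase_matrix :: "('n::finite phase \<Rightarrow> 'n phase) \<Rightarrow> real^('n bit0)^('n bit0)" where
  "phase_matrix f = matrix (phase_coords \<circ> f \<circ> coords_phase)"

lemma phase_matrix_mult:
  "linear f \<Longrightarrow> phase_matrix f *v u = phase_coords (f (coords_phase u))"
  unfolding phase_matrix_def
  by (subst matrix_works)
    (simp_all add: linear_matrix_vector_mul_eq linear_compose linear_phase_coords linear_coords_phase)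

lemma measure_linear_image_phase:
  fixes f :: "'n::finite phase \<Rightarrow> 'n phase"
  assumes f: "linear f" and C: "compact C"
  shows "measure lebesgue (f ` C) = \<bar>det (phase_matrix f)\<bar> * measure lebesgue C"
proof -
  let ?g = "phase_coords \<circ> f \<circ> coords_phase"
  have g: "linear ?g" by (intro linear_compose linear_phase_coords linear_coords_phase f)
  have cont: "continuous_on UNIV ?g" "continuous_on UNIV (phase_coords :: 'n phase \<Rightarrow> _)"
    using g linear_phase_coords linear_linear linear_continuous_on by blast+
  have C': "compact (phase_coords ` C)" and gC: "compact (?g ` phase_coords ` C)"
    using C cont by (auto intro: compact_continuous_image continuous_on_subset)
  have "f ` C = coords_phase ` ?g ` phase_coords ` C" by (auto simp: image_iff)
  then have "measure lebesgue (f ` C) = measure lebesgue (?g ` phase_coords ` C)"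
    using measure_basis_extension_image[OF bij_betw_inv_into[OF bij_betw_phase_basis_map]
        borel_compact[OF gC]]
    by (simp add: coords_phase_def)
  also have "\<dots> = \<bar>det (phase_matrix f)\<bar> * measure lebesgue (phase_coords ` C)"
    unfolding phase_matrix_def by (intro measure_linear_image g lmeasurable_compact C')
  also have "measure lebesgue (phase_coords ` C) = measure lebesgue C"
    using measure_basis_extension_image[OF bij_betw_phase_basis_map borel_compact[OF C]]
    by (simp add: phase_coords_def)
  finally show ?thesis .
qed

section \<open>Hadamard's inequality\<close>

definition unit_row_matrices :: "(real^'m^'m) set" where
  "unit_row_matrices = {A. \<forall>i. norm (row i A) \<le> 1}"

lemma compact_unit_row_matrices: "compact (unit_row_matrices :: (real^'m^'m) set)"
proof -
  have "norm A \<le> real CARD('m)" if "A \<in> unit_row_matrices" for A :: "real^'m^'m"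
  proof -
    have "norm A \<le> (\<Sum>i\<in>UNIV. norm (A $ i))"
      unfolding norm_vec_def by (rule L2_set_le_sum) simp
    also have "\<dots> \<le> (\<Sum>i\<in>(UNIV::'m set). 1)"
      using that by (intro sum_mono) (simp add: unit_row_matrices_def row_def)
    finally show ?thesis by simp
  qed
  then have "bounded (unit_row_matrices :: (real^'m^'m) set)"
    unfolding bounded_iff by blast
  moreover have "closed (unit_row_matrices :: (real^'m^'m) set)"
    unfolding unit_row_matrices_def Collect_all_eq row_def
    by (intro closed_INT ballI closed_Collect_le continuous_intros)
  ultimately show ?thesis by (simp add: compact_eq_bounded_closed)
qed

lemma continuous_on_det: "continuous_on S (det :: real^'m^'m \<Rightarrow> real)"
proof -
  have "continuous_on S (\<lambda>A::real^'m^'m.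
      \<Sum>p | p permutes UNIV. of_int (sign p) * (\<Prod>i\<in>UNIV. A $ i $ p i))"
    by (intro continuous_intros)
  then show ?thesis by (simp add: det_def[abs_def])
qed

lemma mat_1_in_unit_row_matrices: "(mat 1 :: real^'m^'m) \<in> unit_row_matrices"
proof -
  have "row i (mat 1 :: real^'m^'m) = axis i 1" for i
    by (simp add: row_def mat_def axis_def vec_eq_iff)
  then show ?thesis by (simp add: unit_row_matrices_def)
qed

text \<open>A row of a determinant maximiser splits into a part in the span of the other rows, which
  does not contribute to the determinant, and an orthogonal part; normalising the latter can only
  increase the determinant, so the row must already be a unit vector orthogonal to the others.\<close>
lemma det_maximiser_row_orthonormal:
  fixes A :: "real^'m^'m"
  assumes A: "A \<in> unit_row_matrices" and det: "det A \<noteq> 0"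
    and max: "\<And>B :: real^'m^'m. B \<in> unit_row_matrices \<Longrightarrow> \<bar>det B\<bar> \<le> \<bar>det A\<bar>"
  shows "norm (row k A) = 1" and "j \<noteq> k \<Longrightarrow> orthogonal (row k A) (row j A)"
proof -
  let ?W = "{row j A |j. j \<noteq> k}"
  obtain y z where y: "y \<in> span ?W" and z: "\<And>w. w \<in> span ?W \<Longrightarrow> orthogonal z w"
    and yz: "row k A = y + z"
    using orthogonal_subspace_decomp_exists by blast
  define Az where "Az = (\<chi> i. if i = k then z else row i A)"
  have "row k A + (- y) = z" using yz by simp
  then have "det Az = det (\<chi> i. if i = k then row k A + (- y) else row i A)"
    by (simp only: Az_def)
  also have "\<dots> = det A"
    by (rule det_row_span) (simp add: span_vec_eq span_neg y)
  finally have det_Az: "det Az = det A" .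
  have "z \<noteq> 0"
  proof
    assume "z = 0"
    then have "row k Az = 0" by (simp add: Az_def row_def vec_eq_iff)
    then show False using det_zero_row(1)[of k Az] det_Az det by simp
  qed
  let ?An = "\<chi> i. if i = k then (1 / norm z) *s z else row i A"
  have "?An \<in> unit_row_matrices"
    using A \<open>z \<noteq> 0\<close> by (auto simp: unit_row_matrices_def scalar_mult_eq_scaleR row_def)
  then have "\<bar>det ?An\<bar> \<le> \<bar>det A\<bar>" by (rule max)
  moreover have "det ?An = (1 / norm z) * det Az"
    unfolding Az_def by (rule det_row_mul)
  ultimately have "\<bar>(1 / norm z) * det Az\<bar> \<le> \<bar>det A\<bar>" by simp
  then have "1 \<le> norm z"
    using det_Az det \<open>z \<noteq> 0\<close> by (simp add: abs_mult divide_le_eq)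
  moreover have pyth: "(norm (row k A))\<^sup>2 = (norm y)\<^sup>2 + (norm z)\<^sup>2"
    using yz norm_add_Pythagorean[of y z] z[OF y] by (simp add: orthogonal_commute)
  moreover have "(norm (row k A))\<^sup>2 \<le> 1"
    using A by (simp add: unit_row_matrices_def power_le_one)
  ultimately have "(norm y)\<^sup>2 \<le> 0" and "(norm z)\<^sup>2 \<le> 1"
    using one_le_power[of "norm z" 2] zero_le_power2[of "norm y"] by linarith+
  then have "y = 0" and "norm z = 1"
    using \<open>1 \<le> norm z\<close> by (simp_all add: power_le_one_iff)
  then have row_z: "row k A = z" using yz by simp
  then show "norm (row k A) = 1" using \<open>norm z = 1\<close> by simp
  show "orthogonal (row k A) (row j A)" if "j \<noteq> k"
    using row_z z[OF span_base] that by blast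
qed

lemma det_maximiser_orthogonal:
  fixes A :: "real^'m^'m"
  assumes "A \<in> unit_row_matrices" and "det A \<noteq> 0"
    and "\<And>B :: real^'m^'m. B \<in> unit_row_matrices \<Longrightarrow> \<bar>det B\<bar> \<le> \<bar>det A\<bar>"
  shows "orthogonal_matrix A"
  using det_maximiser_row_orthonormal[OF assms]
  by (auto simp: orthogonal_matrix_orthonormal_rows orthogonal_commute)

text \<open>By compactness some matrix maximises |det| among these; it is orthogonal, so the maximum is 1.\<close>
lemma hadamard_unit_rows:
  fixes A :: "real^'m^'m"
  assumes A: "A \<in> unit_row_matrices"
  shows "\<bar>det A\<bar> \<le> 1" and "\<bar>det A\<bar> = 1 \<Longrightarrow> orthogonal_matrix A"
proof -
  have "unit_row_matrices \<noteq> ({} :: (real^'m^'m) set)"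
    using mat_1_in_unit_row_matrices by blast
  then obtain A0 :: "real^'m^'m" where A0: "A0 \<in> unit_row_matrices"
    and max: "\<And>B :: real^'m^'m. B \<in> unit_row_matrices \<Longrightarrow> \<bar>det B\<bar> \<le> \<bar>det A0\<bar>"
    using continuous_attains_sup[OF compact_unit_row_matrices _
        continuous_on_rabs[OF continuous_on_det]] by blast
  have "det A0 \<noteq> 0" using max[OF mat_1_in_unit_row_matrices] by auto
  then have "orthogonal_matrix A0" by (rule det_maximiser_orthogonal[OF A0 _ max])
  then have A0_1: "\<bar>det A0\<bar> = 1" by (auto dest: det_orthogonal_matrix)
  then show "\<bar>det A\<bar> \<le> 1" using max[OF A] by simp
  assume "\<bar>det A\<bar> = 1"
  then show "orthogonal_matrix A"
    using A0_1 max by (intro det_maximiser_orthogonal[OF A]) auto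
qed

section \<open>Symplectic linear algebra\<close>

definition phase_J :: "'n::finite phase \<Rightarrow> 'n phase" where
  "phase_J z = (snd z, - fst z)"

lemma omega_eq_inner: "omega z w = phase_J z \<bullet> w"
  by (simp add: omega_def phase_J_def inner_prod_def inner_commute)

lemma linear_phase_J: "linear phase_J"
  by (rule linearI) (auto simp: phase_J_def)

lemma phase_J_eq_0_iff [simp]: "phase_J z = 0 \<longleftrightarrow> z = 0"
  by (auto simp: phase_J_def prod_eq_iff)

lemma inj_phase_J: "inj phase_J"
  by (rule injI) (auto simp: phase_J_def prod_eq_iff)

lemma omega_add_left: "omega (a + b) c = omega a c + omega b c"
  and omega_add_right: "omega a (b + c) = omega a b + omega a c"
  by (simp_all add: omega_def inner_add_left inner_add_right)

lemma omega_commute: "omega a b = - omega b a"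
  by (simp add: omega_def)

lemma omega_nondegenerate: "(\<And>z. omega z w = 0) \<Longrightarrow> w = 0"
  by (metis omega_commute omega_eq_inner inner_eq_zero_iff neg_equal_0_iff_equal phase_J_eq_0_iff)

lemma symplectic_inv:
  assumes "symplectic S"
  shows "symplectic (inv S)"
proof -
  have S: "linear S" "bij S" "\<And>z w. omega (S z) (S w) = omega z w"
    using assms by (auto simp: symplectic_def)
  have "omega (inv S z) (inv S w) = omega z w" for z w
    using S(3)[of "inv S z" "inv S w"] S(2) by (simp add: bij_is_surj surj_f_inv_f)
  then show ?thesis
    using S by (simp add: symplectic_def bij_imp_bij_inv bij_is_inj eucl.inj_linear_imp_inv_linear)
qed

lemma det_phase_matrix_symplectic:
  fixes S :: "'n::finite phase \<Rightarrow> 'n phase"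
  assumes "symplectic S"
  shows "\<bar>det (phase_matrix S)\<bar> = 1"
proof -
  have S: "linear S" and omega_S: "\<And>z w. omega (S z) (S w) = omega z w"
    using assms by (auto simp: symplectic_def)
  let ?G = "phase_matrix S" and ?M = "phase_matrix (phase_J :: 'n phase \<Rightarrow> _)"
  have omega_coords: "(?M *v (?G *v u)) \<bullet> (?G *v v) = (?M *v u) \<bullet> v" for u v
    using omega_S[of "coords_phase u" "coords_phase v"]
    by (simp add: phase_matrix_mult S linear_phase_J phase_coords_inner_left omega_eq_inner)
  have "((transpose ?G ** ?M ** ?G) *v u) \<bullet> v = (?M *v u) \<bullet> v" for u v
  proof -
    have "((transpose ?G ** ?M ** ?G) *v u) \<bullet> v = (transpose ?G *v (?M *v (?G *v u))) \<bullet> v"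
      by (simp add: matrix_vector_mul_assoc matrix_mul_assoc)
    also have "\<dots> = (?M *v (?G *v u)) \<bullet> (?G *v v)"
      by (metis dot_lmul_matrix vector_transpose_matrix transpose_transpose)
    finally show ?thesis by (simp only: omega_coords)
  qed
  then have "transpose ?G ** ?M ** ?G = ?M"
    by (metis matrix_eq vector_eq_rdot)
  then have "det ?M = det (transpose ?G ** ?M ** ?G)" by simp
  also have "\<dots> = det ?G * det ?G * det ?M" by (simp add: det_mul det_transpose)
  finally have "det ?G * det ?G * det ?M = det ?M" ..
  moreover have "inj (\<lambda>u. ?M *v u)"
  proof (rule injI)
    fix u v assume "?M *v u = ?M *v v"
    then have "phase_J (coords_phase u) = phase_J (coords_phase v)"
      by (metis coords_phase_coords linear_phase_J phase_matrix_mult)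
    then show "u = v" by (metis inj_phase_J injD phase_coords_phase)
  qed
  then have "det ?M \<noteq> 0"
    using det_nz_iff_inj[of "\<lambda>u. ?M *v u"] by simp
  ultimately have "(det ?G)\<^sup>2 = 1" by (simp add: power2_eq_square)
  then show ?thesis by (simp add: abs_square_eq_1)
qed

lemma measure_symplectic_image:
  "symplectic S \<Longrightarrow> compact C \<Longrightarrow> measure lebesgue (S ` C) = measure lebesgue C"
  by (simp add: measure_linear_image_phase det_phase_matrix_symplectic symplectic_def)

section \<open>Ellipsoids in the unit polydisc\<close>

definition unit_polydisc :: "'n::finite phase set" where
  "unit_polydisc = cball 0 1 \<times> cball 0 1"

lemma cball_subset_unit_polydisc: "cball 0 1 \<subseteq> unit_polydisc"
  by (auto simp: unit_polydisc_def intro: order_trans[OF norm_fst_le] order_trans[OF norm_snd_le])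

lemma convex_unit_polydisc: "convex unit_polydisc"
  by (simp add: unit_polydisc_def convex_Times)

lemma uminus_unit_polydisc: "z \<in> unit_polydisc \<Longrightarrow> - z \<in> unit_polydisc"
  by (auto simp: unit_polydisc_def)

lemma unit_polydisc_inner_Basis:
  assumes "w \<in> unit_polydisc" and "b \<in> Basis"
  shows "\<bar>w \<bullet> b\<bar> \<le> 1"
proof -
  have "\<bar>fst w \<bullet> u\<bar> \<le> 1" "\<bar>snd w \<bullet> u\<bar> \<le> 1" if "u \<in> Basis" for u :: "real^'a"
    using assms(1) that Cauchy_Schwarz_ineq2[of "fst w" u] Cauchy_Schwarz_ineq2[of "snd w" u]
    by (auto simp: unit_polydisc_def)
  then show ?thesis using assms(2) by (auto simp: Basis_prod_def inner_prod_def)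
qed

lemma mem_if_translates_mem_symmetric_convex:
  assumes "convex S" and "\<And>z. z \<in> S \<Longrightarrow> - z \<in> S" and "c + x \<in> S" and "c - x \<in> S"
  shows "x \<in> S"
proof -
  have "- (c - x) \<in> S" using assms by blast
  then have "(1/2) *\<^sub>R (c + x) + (1/2) *\<^sub>R (- (c - x)) \<in> S"
    using assms by (intro convexD) auto
  then show ?thesis by (simp add: algebra_simps flip: scaleR_add_left)
qed

lemma translate_cball_subset_unit_polydisc:
  assumes "(+) c ` cball 0 1 \<subseteq> (unit_polydisc :: 'n::finite phase set)"
  shows "c = 0"
proof -
  have c_plus: "c + u \<in> unit_polydisc" if "norm u \<le> 1" for u
    using that by (intro subsetD[OF assms] imageI) simp
  have "cball (fst c) 1 \<subseteq> cball 0 1"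
  proof
    fix x assume "x \<in> cball (fst c) 1"
    then have "c + (x - fst c, 0) \<in> unit_polydisc"
      by (intro c_plus) (simp add: dist_norm norm_Pair norm_minus_commute)
    then show "x \<in> cball 0 1" by (simp add: unit_polydisc_def mem_Times_iff)
  qed
  moreover have "cball (snd c) 1 \<subseteq> cball (0 :: real^'n) 1"
  proof
    fix p assume "p \<in> cball (snd c) 1"
    then have "c + (0, p - snd c) \<in> unit_polydisc"
      by (intro c_plus) (simp add: dist_norm norm_Pair norm_minus_commute)
    then show "p \<in> cball 0 1" by (simp add: unit_polydisc_def mem_Times_iff)
  qed
  ultimately show ?thesis by (simp add: cball_subset_cball_iff prod_eq_iff)
qed

lemma norm_le_1_if_inner_le_1:
  fixes x :: "'a::real_inner"
  assumes "\<And>v. norm v \<le> 1 \<Longrightarrow> \<bar>x \<bullet> v\<bar> \<le> 1"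
  shows "norm x \<le> 1"
proof (cases "x = 0")
  case False
  then show ?thesis
    using assms[of "x /\<^sub>R norm x"] by (simp add: dot_square_norm power2_eq_square field_simps)
qed simp

lemma phase_matrix_in_unit_row_matrices:
  assumes A: "linear A" and sub: "A ` cball 0 1 \<subseteq> unit_polydisc"
  shows "phase_matrix A \<in> unit_row_matrices"
  unfolding unit_row_matrices_def
proof (intro CollectI allI norm_le_1_if_inner_le_1)
  fix i v assume "norm (v :: real^('a bit0)) \<le> 1"
  then have "A (coords_phase v) \<in> unit_polydisc" using sub by auto
  moreover have "row i (phase_matrix A) \<bullet> v = (phase_matrix A *v v) $ i"
    by (simp add: row_def inner_vec_def matrix_vector_mult_def)
  then have "row i (phase_matrix A) \<bullet> v = A (coords_phase v) \<bullet> coords_phase (axis i 1)"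
    by (simp add: phase_matrix_mult A inner_axis phase_coords_inner_left[symmetric])
  ultimately show "\<bar>row i (phase_matrix A) \<bullet> v\<bar> \<le> 1"
    by (simp add: unit_polydisc_inner_Basis coords_phase_Basis axis_in_Basis_iff)
qed

lemma measure_unit_cball_pos: "0 < measure lebesgue (cball (0::'a::euclidean_space) 1)"
  using content_cball_pos[of 1 "0::'a"] by (simp add: borel_compact)

lemma orthogonal_transformation_if_phase_matrix:
  assumes A: "linear A" and orth: "orthogonal_matrix (phase_matrix A)"
  shows "orthogonal_transformation A"
proof -
  let ?g = "phase_coords \<circ> A \<circ> coords_phase"
  have "orthogonal_transformation ?g"
    using orth A unfolding phase_matrix_def
    by (simp add: orthogonal_transformation_matrix linear_compose linear_phase_coords
        linear_coords_phase)
  then have "norm (?g (phase_coords z)) = norm (phase_coords z)" for z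
    by (rule orthogonal_transformation_norm)
  then show ?thesis using A by (simp add: orthogonal_transformation)
qed

lemma measure_ellipsoid_in_unit_polydisc:
  fixes A :: "'n::finite phase \<Rightarrow> 'n phase"
  assumes A: "linear A" and sub: "(\<lambda>z. c + A z) ` cball 0 1 \<subseteq> unit_polydisc"
  shows "measure lebesgue ((\<lambda>z. c + A z) ` cball 0 1) \<le> measure lebesgue (cball (0::'n phase) 1)"
    and "measure lebesgue ((\<lambda>z. c + A z) ` cball 0 1) = measure lebesgue (cball (0::'n phase) 1)
      \<Longrightarrow> (\<lambda>z. c + A z) ` cball 0 1 = cball 0 1"
proof -
  have "A u \<in> unit_polydisc" if "u \<in> cball 0 1" for u
  proof (rule mem_if_translates_mem_symmetric_convex)
    show "c + A u \<in> unit_polydisc" using sub that by auto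
    have "c + A (- u) \<in> unit_polydisc" using sub that by auto
    then show "c - A u \<in> unit_polydisc" by (simp add: linear_neg[OF A])
  qed (simp_all add: convex_unit_polydisc uminus_unit_polydisc)
  then have rows: "phase_matrix A \<in> unit_row_matrices"
    by (intro phase_matrix_in_unit_row_matrices A) auto
  have img: "(\<lambda>z. c + A z) ` cball 0 1 = (+) c ` A ` cball 0 1" by auto
  have vol: "measure lebesgue ((\<lambda>z. c + A z) ` cball 0 1)
      = \<bar>det (phase_matrix A)\<bar> * measure lebesgue (cball (0::'n phase) 1)"
    unfolding img measure_translation by (rule measure_linear_image_phase[OF A compact_cball])
  then show "measure lebesgue ((\<lambda>z. c + A z) ` cball 0 1) \<le> measure lebesgue (cball (0::'n phase) 1)"
    using hadamard_unit_rows(1)[OF rows] measure_unit_cball_pos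
    by (simp add: mult_le_cancel_right1)
  assume "measure lebesgue ((\<lambda>z. c + A z) ` cball 0 1) = measure lebesgue (cball (0::'n phase) 1)"
  then have "\<bar>det (phase_matrix A)\<bar> = 1" using vol measure_unit_cball_pos by simp
  then have "orthogonal_transformation A"
    by (intro orthogonal_transformation_if_phase_matrix A hadamard_unit_rows(2)[OF rows])
  then have A_ball: "A ` cball 0 1 = cball 0 1"
    by (simp add: image_orthogonal_transformation_cball linear_0[OF A])
  then have "c = 0"
    using sub unfolding img by (intro translate_cball_subset_unit_polydisc) simp
  then show "(\<lambda>z. c + A z) ` cball 0 1 = cball 0 1" using A_ball by simp
qed

section \<open>The symplectic frame of a transverse Lagrangian pair\<close>

lemma centered_ellipsoid_in_parametrisation:
  fixes L :: "'n::finite phase set"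
  assumes L: "subspace L" "dim L = CARD('n)" and X: "centered_ellipsoid_in L X"
  obtains Phi :: "real^'n \<Rightarrow> 'n phase"
  where "linear Phi" "inj Phi" "range Phi = L" "X = Phi ` cball 0 1"
proof -
  obtain A where A: "linear A" "A ` L = L" "inj_on A L" and XA: "X = A ` (cball 0 1 \<inter> L)"
    using X by (auto simp: centered_ellipsoid_in_def)
  have "dim (UNIV :: (real^'n) set) = dim L" using L by simp
  then obtain f :: "real^'n \<Rightarrow> 'n phase" and g :: "'n phase \<Rightarrow> real^'n"
    where lin: "linear f" "linear g" and img: "range f = L" "g ` L = UNIV"
      and norm_f: "\<And>x. x \<in> UNIV \<Longrightarrow> norm (f x) = norm x"
      and norm_g: "\<And>y. y \<in> L \<Longrightarrow> norm (g y) = norm y"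
      and gf: "\<And>x. x \<in> UNIV \<Longrightarrow> g (f x) = x" and fg: "\<And>y. y \<in> L \<Longrightarrow> f (g y) = y"
    by (rule isometries_subspaces[OF subspace_UNIV L(1)]) blast
  have "f ` cball 0 1 = cball 0 1 \<inter> L"
  proof
    show "f ` cball 0 1 \<subseteq> cball 0 1 \<inter> L" using img(1) norm_f by auto
    show "cball 0 1 \<inter> L \<subseteq> f ` cball 0 1"
    proof
      fix y assume "y \<in> cball 0 1 \<inter> L"
      then have "y = f (g y)" and "g y \<in> cball 0 1" using fg norm_g by auto
      then show "y \<in> f ` cball 0 1" by blast
    qed
  qed
  then have "X = A ` f ` cball 0 1" unfolding XA by simp
  then have "X = (A \<circ> f) ` cball 0 1" by (simp only: image_comp)
  moreover have "inj (A \<circ> f)"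
  proof (rule injI)
    fix x y assume "(A \<circ> f) x = (A \<circ> f) y"
    then have "f x = f y" using A(3) img(1) by (auto dest: inj_onD)
    then show "x = y" using gf by (metis UNIV_I)
  qed
  moreover have "range (A \<circ> f) = L" by (simp only: image_comp[symmetric] A(2) img(1))
  ultimately show ?thesis using that linear_compose[OF lin(1) A(1)] by blast
qed

lemma complementary_subspaces_decomp:
  fixes L L' :: "'a::euclidean_space set"
  assumes L: "subspace L" "subspace L'" and "L \<inter> L' = {0}" and "dim L + dim L' = DIM('a)"
  obtains a b where "a \<in> L" "b \<in> L'" "z = a + b"
proof -
  let ?S = "{a + b |a b. a \<in> L \<and> b \<in> L'}"
  have "dim ?S + dim (L \<inter> L') = dim L + dim L'" by (rule dim_sums_Int[OF L])
  then have "dim ?S = DIM('a)" using assms by simp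
  then have "span ?S = UNIV" by (rule dim_eq_full[THEN iffD1])
  moreover have "span ?S = ?S" using subspace_sums[OF L] by (simp add: span_eq_iff)
  ultimately show ?thesis using that by blast
qed

lemma transverse_lagrangian_decomp:
  fixes L L' :: "'n::finite phase set"
  assumes "lagrangian_plane L" "lagrangian_plane L'" "transverse L L'"
  obtains a b where "a \<in> L" "b \<in> L'" "z = a + b"
proof (rule complementary_subspaces_decomp)
  show "subspace L" "subspace L'" "dim L + dim L' = DIM('n phase)"
    using assms(1,2) by (auto simp: lagrangian_plane_def)
  show "L \<inter> L' = {0}" using assms(3) by (simp add: transverse_def)
qed (rule that)

text \<open>Psi inverts T w = - adjoint (phase_J \<circ> Phi) w on L'. T is injective there because
  omega is nondegenerate, L' is isotropic and L + L' is the whole space.\<close>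
lemma lagrangian_dual_parametrisation:
  fixes L L' :: "'n::finite phase set" and Phi :: "real^'n \<Rightarrow> 'n phase"
  assumes lag: "lagrangian_plane L" "lagrangian_plane L'" "transverse L L'"
    and Phi: "linear Phi" "range Phi = L"
  obtains Psi :: "real^'n \<Rightarrow> 'n phase"
  where "linear Psi" "inj Psi" "range Psi = L'" "\<And>x p. omega (Phi x) (Psi p) = - (x \<bullet> p)"
proof -
  have L': "subspace L'" "dim L' = CARD('n)" "\<And>z w. z \<in> L' \<Longrightarrow> w \<in> L' \<Longrightarrow> omega z w = 0"
    using lag by (auto simp: lagrangian_plane_def)
  define T where "T w = - adjoint (phase_J \<circ> Phi) w" for w
  have JPhi: "linear (phase_J \<circ> Phi)" by (intro linear_compose Phi(1) linear_phase_J)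
  have T: "linear T"
    unfolding T_def using linear_compose_neg[OF adjoint_linear[OF JPhi]] by (simp add: o_def)
  have omega_T: "omega (Phi x) w = - (x \<bullet> T w)" for x w
    by (simp add: T_def omega_eq_inner adjoint_works[OF JPhi])
  have T_0: "w = 0" if "w \<in> L'" "T w = 0" for w
  proof (rule omega_nondegenerate)
    fix z
    obtain a b where ab: "a \<in> L" "b \<in> L'" "z = a + b"
      using transverse_lagrangian_decomp[OF lag] by blast
    then obtain x where "a = Phi x" using Phi(2) by auto
    then show "omega z w = 0" using ab that L'(3) omega_T[of x w] by (simp add: omega_add_left)
  qed
  have span_L': "span L' = L'" using L'(1) by (simp add: span_eq_iff)
  have inj_T: "inj_on T (span L')"
    unfolding span_L' using T_0 L'(1)
    by (intro inj_onI) (metis linear_diff[OF T] subspace_diff right_minus_eq)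
  have "dim (T ` L') = DIM(real^'n)" using dim_image_eq[OF T inj_T] L'(2) by simp
  then have "span (T ` L') = UNIV" by (rule dim_eq_full[THEN iffD1])
  then have T_onto: "T ` L' = UNIV"
    using linear_subspace_image[OF T L'(1)] by (metis span_eq_iff)
  obtain g where g: "range g \<subseteq> L'" "linear g" "\<And>w. w \<in> L' \<Longrightarrow> g (T w) = w"
    using linear_inj_on_left_inverse[OF T inj_T] unfolding span_L' by blast
  have Tg: "T (g p) = p" for p
    using T_onto g(3) by (metis UNIV_I imageE)
  show ?thesis
  proof (rule that[OF g(2)])
    show "inj g" by (metis Tg injI)
    show "range g = L'"
      using g(1) g(3)[symmetric] by (auto intro: rangeI)
    show "omega (Phi x) (g p) = - (x \<bullet> p)" for x p by (simp add: omega_T Tg)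
  qed
qed

lemma symplectic_lagrangian_frame:
  fixes L L' :: "'n::finite phase set" and Phi Psi :: "real^'n \<Rightarrow> 'n phase"
  assumes lag: "lagrangian_plane L" "lagrangian_plane L'" "transverse L L'"
    and Phi: "linear Phi" "inj Phi" "range Phi = L"
    and Psi: "linear Psi" "inj Psi" "range Psi = L'"
    and pairing: "\<And>x p. omega (Phi x) (Psi p) = - (x \<bullet> p)"
  shows "symplectic (\<lambda>z. Phi (fst z) + Psi (snd z))" (is "symplectic ?S")
proof -
  have isotropic: "omega (Phi x) (Phi x') = 0" "omega (Psi p) (Psi p') = 0" for x x' p p'
    using lag(1,2) Phi(3) Psi(3) by (auto simp: lagrangian_plane_def)
  have lin: "linear ?S"
    using linear_compose_add[OF linear_compose[OF linear_fst Phi(1)]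
        linear_compose[OF linear_snd Psi(1)]] by (simp add: o_def)
  have pairing': "omega (Psi p) (Phi x) = x \<bullet> p" for x p
    using pairing[of x p] omega_commute[of "Psi p" "Phi x"] by simp
  have "omega (?S z) (?S w) = omega z w" for z w
    by (simp add: omega_add_left omega_add_right isotropic pairing pairing')
      (simp add: omega_def inner_commute)
  moreover have "inj ?S"
  proof -
    have "z = 0" if "?S z = 0" for z
    proof -
      have "Phi (fst z) = - Psi (snd z)" using that by (simp add: eq_neg_iff_add_eq_0)
      moreover have "- Psi (snd z) \<in> L'"
        using Psi(3) lag(2) subspace_neg[of L' "Psi (snd z)"] by (auto simp: lagrangian_plane_def)
      ultimately have "Phi (fst z) \<in> L'" by simp
      moreover have "Phi (fst z) \<in> L" unfolding Phi(3)[symmetric] by (rule rangeI)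
      ultimately have "Phi (fst z) \<in> L \<inter> L'" by (rule IntI[rotated])
      then have "Phi (fst z) = 0" using lag(3) unfolding transverse_def by blast
      then have "Psi (snd z) = 0" using \<open>Phi (fst z) = - Psi (snd z)\<close> by simp
      then have "snd z = 0" using Psi(2) linear_0[OF Psi(1)] by (metis injD)
      moreover have "fst z = 0"
        using \<open>Phi (fst z) = 0\<close> Phi(2) linear_0[OF Phi(1)] by (metis injD)
      ultimately show "z = 0" by (simp add: prod_eq_iff)
    qed
    then show ?thesis using linear_injective_0[OF lin] by blast
  qed
  ultimately show ?thesis
    using lin linear_inj_imp_surj[OF lin] unfolding symplectic_def bij_def by blast
qed

lemma lag_polar_lagrangian_frame:
  fixes Phi Psi :: "real^'n::finite \<Rightarrow> 'n phase"
  assumes Psi: "range Psi = L'" and pairing: "\<And>x p. omega (Phi x) (Psi p) = - (x \<bullet> p)"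
  shows "lag_polar (Phi ` cball 0 1) L' = Psi ` cball 0 1"
proof -
  have dual_ball: "(\<forall>x\<in>cball 0 1. - (x \<bullet> p) \<le> 1) \<longleftrightarrow> norm p \<le> 1" for p :: "real^'n"
  proof
    assume le: "\<forall>x\<in>cball 0 1. - (x \<bullet> p) \<le> 1"
    show "norm p \<le> 1"
    proof (rule norm_le_1_if_inner_le_1)
      fix v :: "real^'n" assume "norm v \<le> 1"
      then have "- (v \<bullet> p) \<le> 1" and "- ((- v) \<bullet> p) \<le> 1"
        using le by (simp_all only: mem_cball_0 norm_minus_cancel)
      then show "\<bar>p \<bullet> v\<bar> \<le> 1" by (simp add: inner_commute)
    qed
  next
    assume p: "norm p \<le> 1"
    show "\<forall>x\<in>cball 0 1. - (x \<bullet> p) \<le> 1"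
    proof
      fix x :: "real^'n" assume "x \<in> cball 0 1"
      then have "norm x * norm p \<le> 1" using p by (simp add: mult_le_one)
      then show "- (x \<bullet> p) \<le> 1" using Cauchy_Schwarz_ineq2[of x p] by linarith
    qed
  qed
  have ball_eq: "{p. \<forall>x\<in>cball 0 1. - (x \<bullet> p) \<le> 1} = cball (0 :: real^'n) 1"
    by (rule set_eqI) (simp only: mem_Collect_eq mem_cball_0 dual_ball)
  have "lag_polar (Phi ` cball 0 1) L' = Psi ` {p. \<forall>x\<in>cball 0 1. - (x \<bullet> p) \<le> 1}"
    unfolding lag_polar_def Psi[symmetric] by (auto simp: pairing)
  then show ?thesis unfolding ball_eq .
qed

section \<open>Normal form, John ellipsoid and linear capacity\<close>

lemma lag_product_normal_form:
  fixes L L' :: "'n::finite phase set" and X :: "'n phase set"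
  assumes lag: "lagrangian_plane L" "lagrangian_plane L'" "transverse L L'"
    and X: "centered_ellipsoid_in L X"
  obtains S0 where "symplectic S0" "lag_product X (lag_polar X L') = S0 ` unit_polydisc"
proof -
  obtain Phi :: "real^'n \<Rightarrow> 'n phase"
    where Phi: "linear Phi" "inj Phi" "range Phi = L" and X_Phi: "X = Phi ` cball 0 1"
    using centered_ellipsoid_in_parametrisation[OF _ _ X] lag(1)
    by (auto simp: lagrangian_plane_def)
  obtain Psi :: "real^'n \<Rightarrow> 'n phase"
    where Psi: "linear Psi" "inj Psi" "range Psi = L'"
      and pairing: "\<And>x p. omega (Phi x) (Psi p) = - (x \<bullet> p)"
    using lagrangian_dual_parametrisation[OF lag Phi(1,3)] by blast
  let ?S0 = "\<lambda>z. Phi (fst z) + Psi (snd z)"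
  have "lag_product X (lag_polar X L') = ?S0 ` (cball 0 1 \<times> cball 0 1)"
  proof (intro set_eqI iffI)
    fix z assume "z \<in> lag_product X (lag_polar X L')"
    then obtain x p where "x \<in> cball 0 1" "p \<in> cball 0 1" "z = Phi x + Psi p"
      unfolding X_Phi lag_polar_lagrangian_frame[OF Psi(3) pairing] lag_product_def by blast
    then show "z \<in> ?S0 ` (cball 0 1 \<times> cball 0 1)" by (intro image_eqI[of _ _ "(x, p)"]) auto
  next
    fix z assume "z \<in> ?S0 ` (cball 0 1 \<times> cball 0 1)"
    then obtain x p where "x \<in> cball 0 1" "p \<in> cball 0 1" "z = Phi x + Psi p" by auto
    then show "z \<in> lag_product X (lag_polar X L')"
      unfolding X_Phi lag_polar_lagrangian_frame[OF Psi(3) pairing] lag_product_def by blast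
  qed
  then show ?thesis
    using that symplectic_lagrangian_frame[OF lag Phi Psi pairing] unfolding unit_polydisc_def
    by blast
qed

lemma compact_solid_ellipsoid:
  fixes E :: "'n::finite phase set"
  assumes "solid_ellipsoid E"
  shows "compact E"
proof -
  obtain A :: "'n phase \<Rightarrow> 'n phase" and c
    where "linear A" and E: "E = (\<lambda>z. c + A z) ` cball 0 1"
    using assms by (auto simp: solid_ellipsoid_def)
  then have "continuous_on (cball 0 1) (\<lambda>z. c + A z)"
    by (intro continuous_intros linear_continuous_on) (simp add: linear_linear)
  then show ?thesis unfolding E by (rule compact_continuous_image[OF _ compact_cball])
qed

lemma solid_ellipsoid_linear_image_cball:
  fixes S :: "'n::finite phase \<Rightarrow> 'n phase"
  assumes S: "linear S" "bij S" and R: "R > 0"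
  shows "solid_ellipsoid (S ` cball z0 R)"
proof -
  have translate: "cball z0 R = (+) z0 ` cball 0 R"
    using cball_translation[of z0 0 R] by simp
  have scale: "(\<lambda>z. R *\<^sub>R z) ` cball (0 :: 'n phase) 1 = cball 0 R"
    using cball_scale[of R 0 1] R by simp
  have "cball z0 R = (\<lambda>z. z0 + R *\<^sub>R z) ` cball 0 1"
    unfolding translate scale[symmetric] image_image ..
  then have "S ` cball z0 R = (\<lambda>z. S z0 + (S \<circ> (\<lambda>z. R *\<^sub>R z)) z) ` cball 0 1"
    by (simp add: image_image linear_add[OF S(1)])
  moreover have "linear (S \<circ> (\<lambda>z. R *\<^sub>R z))"
    using S(1) by (intro linear_compose linear_scaleR)
  moreover have "bij (\<lambda>z. R *\<^sub>R z :: 'n phase)"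
    using R by (intro o_bij[of "\<lambda>z. z /\<^sub>R R"]) (auto simp: fun_eq_iff)
  then have "bij (S \<circ> (\<lambda>z. R *\<^sub>R z))" using S(2) by (rule bij_comp)
  ultimately show ?thesis
    unfolding solid_ellipsoid_def by blast
qed

lemma measure_ellipsoid_in_symplectic_polydisc:
  fixes S0 :: "'n::finite phase \<Rightarrow> 'n phase"
  assumes S0: "symplectic S0" and E: "solid_ellipsoid E" and sub: "E \<subseteq> S0 ` unit_polydisc"
  shows "measure lebesgue E \<le> measure lebesgue (cball (0::'n phase) 1)"
    and "measure lebesgue E = measure lebesgue (cball (0::'n phase) 1) \<Longrightarrow> E = S0 ` cball 0 1"
proof -
  obtain B :: "'n phase \<Rightarrow> 'n phase" and c where B: "linear B"
    and E_def: "E = (\<lambda>z. c + B z) ` cball 0 1"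
    using E by (auto simp: solid_ellipsoid_def)
  let ?T = "inv S0"
  have T: "symplectic ?T" by (rule symplectic_inv[OF S0])
  have S0_T: "S0 (?T z) = z" and T_S0: "?T (S0 z) = z" for z
    using S0 by (simp_all add: symplectic_def bij_is_surj bij_is_inj surj_f_inv_f inv_f_f)
  have TE: "?T ` E = (\<lambda>z. ?T c + (?T \<circ> B) z) ` cball 0 1"
    using T by (simp add: E_def image_image symplectic_def linear_add)
  have "?T ` E \<subseteq> unit_polydisc" using sub T_S0 by auto
  then have sub': "(\<lambda>z. ?T c + (?T \<circ> B) z) ` cball 0 1 \<subseteq> unit_polydisc" by (simp only: TE)
  have lin: "linear (?T \<circ> B)" using T B by (simp add: symplectic_def linear_compose)
  have vol: "measure lebesgue E = measure lebesgue ((\<lambda>z. ?T c + (?T \<circ> B) z) ` cball 0 1)"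
    using measure_symplectic_image[OF T compact_solid_ellipsoid[OF E]] by (simp only: TE)
  show "measure lebesgue E \<le> measure lebesgue (cball (0::'n phase) 1)"
    unfolding vol by (rule measure_ellipsoid_in_unit_polydisc(1)[OF lin sub'])
  assume "measure lebesgue E = measure lebesgue (cball (0::'n phase) 1)"
  then have "?T ` E = cball 0 1"
    unfolding TE vol by (rule measure_ellipsoid_in_unit_polydisc(2)[OF lin sub'])
  then have "S0 ` ?T ` E = S0 ` cball 0 1" by simp
  then show "E = S0 ` cball 0 1" by (simp add: image_image S0_T)
qed

lemma max_vol_ellipsoid_symplectic_polydisc:
  fixes S0 :: "'n::finite phase \<Rightarrow> 'n phase"
  assumes S0: "symplectic S0"
  shows "max_vol_ellipsoid (S0 ` unit_polydisc) (S0 ` cball 0 1)"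
    and "max_vol_ellipsoid (S0 ` unit_polydisc) E \<Longrightarrow> E = S0 ` cball 0 1"
proof -
  have ell: "solid_ellipsoid (S0 ` cball 0 1)"
    using S0 solid_ellipsoid_linear_image_cball[of S0 1 0] by (simp add: symplectic_def)
  have vol: "measure lebesgue (S0 ` cball 0 1) = measure lebesgue (cball (0::'n phase) 1)"
    by (rule measure_symplectic_image[OF S0 compact_cball])
  show "max_vol_ellipsoid (S0 ` unit_polydisc) (S0 ` cball 0 1)"
    unfolding max_vol_ellipsoid_def
    using ell vol cball_subset_unit_polydisc measure_ellipsoid_in_symplectic_polydisc(1)[OF S0]
    by auto
  assume "max_vol_ellipsoid (S0 ` unit_polydisc) E"
  then have E: "solid_ellipsoid E" "E \<subseteq> S0 ` unit_polydisc"
    and E_max: "\<And>E'. solid_ellipsoid E' \<Longrightarrow> E' \<subseteq> S0 ` unit_polydisc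
      \<Longrightarrow> measure lebesgue E' \<le> measure lebesgue E"
    by (auto simp: max_vol_ellipsoid_def)
  have "measure lebesgue (S0 ` cball 0 1) \<le> measure lebesgue E"
    using ell cball_subset_unit_polydisc by (intro E_max) auto
  then show "E = S0 ` cball 0 1"
    using measure_ellipsoid_in_symplectic_polydisc[OF S0 E] vol by (simp add: order.antisym)
qed

lemma measure_cball_eq_scaled:
  "R \<ge> 0 \<Longrightarrow> measure lebesgue (cball (z0::'a::euclidean_space) R)
    = R ^ DIM('a) * measure lebesgue (cball (0::'a) 1)"
  by (simp add: borel_compact content_cball)

lemma c_lin_min_symplectic_polydisc:
  fixes S0 :: "'n::finite phase \<Rightarrow> 'n phase"
  assumes S0: "symplectic S0"
  shows "c_lin_min (S0 ` unit_polydisc) = pi"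
  unfolding c_lin_min_def
proof (rule cSup_eq_maximum)
  show "pi \<in> {pi * R\<^sup>2 |R. R > 0 \<and> (\<exists>S z0. symplectic S \<and> S ` cball z0 R \<subseteq> S0 ` unit_polydisc)}"
    using S0 cball_subset_unit_polydisc
    by (intro CollectI exI[of _ 1] conjI exI[of _ S0] exI[of _ 0]) auto
  fix x assume "x \<in> {pi * R\<^sup>2 |R. R > 0 \<and> (\<exists>S z0. symplectic S \<and> S ` cball z0 R \<subseteq> S0 ` unit_polydisc)}"
  then obtain R S z0 where x: "x = pi * R\<^sup>2" and R: "R > 0" and S: "symplectic S"
    and sub: "S ` cball z0 R \<subseteq> S0 ` unit_polydisc" by blast
  have "solid_ellipsoid (S ` cball z0 R)"
    using S R by (intro solid_ellipsoid_linear_image_cball) (auto simp: symplectic_def)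
  then have "measure lebesgue (S ` cball z0 R) \<le> measure lebesgue (cball (0::'n phase) 1)"
    by (rule measure_ellipsoid_in_symplectic_polydisc(1)[OF S0 _ sub])
  then have "R ^ DIM('n phase) * measure lebesgue (cball (0::'n phase) 1)
      \<le> 1 * measure lebesgue (cball (0::'n phase) 1)"
    using measure_symplectic_image[OF S compact_cball] measure_cball_eq_scaled[of R z0] R by simp
  then have "R ^ DIM('n phase) \<le> 1" using measure_unit_cball_pos by (rule mult_right_le_imp_le)
  then have "R \<le> 1" using R by (simp add: power_le_one_iff)
  then show "x \<le> pi" using x R by (simp add: power_le_one mult_le_cancel_left1)
qed

theorem mainTheorem7:
  fixes L L' :: "'n::finite phase set" and X :: "'n phase set"
  assumes "lagrangian_plane L" and "lagrangian_plane L'" and "transverse L L'"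
    and "centered_ellipsoid_in L X"
  shows "(\<exists>S. symplectic S \<and>
            max_vol_ellipsoid (lag_product X (lag_polar X L')) (S ` cball 0 1) \<and>
            (\<forall>E. max_vol_ellipsoid (lag_product X (lag_polar X L')) E \<longrightarrow> E = S ` cball 0 1))
         \<and> c_lin_min (lag_product X (lag_polar X L')) = pi"
proof -
  obtain S0 where S0: "symplectic S0"
    and K: "lag_product X (lag_polar X L') = S0 ` unit_polydisc"
    using lag_product_normal_form[OF assms] by blast
  show ?thesis
    unfolding K using S0 max_vol_ellipsoid_symplectic_polydisc[OF S0]
      c_lin_min_symplectic_polydisc[OF S0] by blast
qed

end
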